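(* Assume the setting of the context (good prime $p$, nonzero integer weights $a_1,\dots,a_n$). Let $x\in\mathbb F_p^n$ with $[f]_C(x)\neq0$ for every circuit $C$. Suppose $t^0\in\mathbb F_p^k$ satisfies $[f]_j(x,t^0)\neq0$ for all $j\in J$ and the Bethe ansatz equations $$\sum_{j\in J}[b^i_j]\frac{[a_j]}{[f]_j(x,t^0)}=0,\qquad i=1,\dots,k.$$ Then the vector $$F(x,t^0)=\sum_{\text{independent }\{j_1<\dots<j_k\}}\frac{[d_{j_1,\dots,j_k}]}{[f]_{j_1}(x,t^0)\cdots[f]_{j_k}(x,t^0)}F(j_1,\dots,j_k)\in V$$ satisfies the singular vector equations and is an eigenvector of the geometric Hamiltonians: $$[K]_i(x)F(x,t^0)=\frac{[a_i]}{[f]_i(x,t^0)}F(x,t^0),\qquad i=1,\dots,n.$$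
   Context: Setting. Let $k<n$ be positive integers and $J=\{1,\dots,n\}$. Fix integers $b^i_j$ ($j\in J$, $i=1,\dots,k$) such that each linear form $g_j(t)=\sum_{i=1}^kb^i_jt_i$ is nonzero and $g_1,\dots,g_n$ span a $k$-dimensional space. Put $f_j(z,t)=z_j+g_j(t)$. A circuit is a subset $C\subset J$ such that $(g_i)_{i\in C}$ are linearly dependent over $\mathbb C$ but every proper subset gives linearly independent forms; $\mathfrak C$ is the set of circuits. For each circuit $C$ fix integers $(\lambda^i_C)_{i\in J}$, not all zero, $\lambda^i_C=0$ for $i\notin C$, $\sum_i\lambda^i_Cg_i=0$, gcd $1$; $f_C(z)=\sum_i\lambda^i_Cz_i$. $[\cdot]$ is reduction mod the prime $p$, coefficientwise; $[f]_j(x,t)=x_j+\sum_i[b^i_j]t_i$, $[f]_C(x)=\sum_i[\lambda^i_C]x_i$. The prime $p$ is good if all $[g]_j,[f]_j,[f]_C$ are nonzero and the circuits of $([g]_j)$ over $\mathbb F_p$ coincide with $\mathfrak C$. A $k$-subset $\{j_1,\dots,j_k\}$ is independent if $g_{j_1},\dots,g_{j_k}$ are linearly independent; $d_{j_1,\dots,j_k}=\det_{i,l}(b^i_{j_l})$. $V$: the $\mathbb F_p$-vector space with basis $F(j_1,\dots,j_k)$ indexed by independent $\{j_1<\dots<j_k\}$, with $F(j_{\sigma(1)},\dots,j_{\sigma(k)})=\mathrm{sgn}(\sigma)F(j_1,\dots,j_k)$. Singular vector equations: for $v=\sum I_{j_1,\dots,j_k}F(j_1,\dots,j_k)$, extend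 coefficients to all $(j_1,\dots,j_k)\in J^k$ skew-symmetrically, with $I_{j_1,\dots,j_k}=0$ if entries are not distinct or not independent; require $\sum_{j\in J}[a_j]I_{j,j_2,\dots,j_k}=0$ for all $j_2,\dots,j_k\in J$. Operators $[L]_C$: for a circuit $C=\{i_1<\dots<i_r\}$ and $C_m=C\setminus\{i_m\}$: $[L]_CF(j_1,\dots,j_k)=0$ if $|\{j_1,\dots,j_k\}\cap C|<r-1$; if $\{j_1,\dots,j_k\}\cap C=C_m$ and $\{j_1,\dots,j_k\}\setminus C_m=\{s_1,\dots,s_{k-r+1}\}$, then (using the sign rule) $[L]_CF(i_1,\dots,\widehat{i_m},\dots,i_r,s_1,\dots,s_{k-r+1})=(-1)^m\sum_{l=1}^r(-1)^l[a_{i_l}]F(i_1,\dots,\widehat{i_l},\dots,i_r,s_1,\dots,s_{k-r+1})$. Geometric Hamiltonians: $[K]_i(x)=\sum_{C\in\mathfrak C}\frac{[\lambda^i_C]}{[f]_C(x)}[L]_C\in\mathrm{End}(V)$, $i\in J$. *)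

theory Defs
  imports Complex_Main "Berlekamp_Zassenhaus.Finite_Field" "Jordan_Normal_Form.Determinant"
begin

text \<open>Linear forms g_j(t) = sum_i B i j t_i (i = 1..k), with coefficients in a field.
  The family (g_j)_{j in S} is linearly independent (literal definition).\<close>
definition lin_indep_forms :: "(nat \<Rightarrow> nat \<Rightarrow> 'f::field) \<Rightarrow> nat \<Rightarrow> nat set \<Rightarrow> bool" where
  "lin_indep_forms B k S \<longleftrightarrow>
     (\<forall>c :: nat \<Rightarrow> 'f. (\<forall>i\<in>{1..k}. (\<Sum>j\<in>S. c j * B i j) = 0) \<longrightarrow> (\<forall>j\<in>S. c j = 0))"

definition is_circuit :: "(nat \<Rightarrow> nat \<Rightarrow> 'f::field) \<Rightarrow> nat \<Rightarrow> nat set \<Rightarrow> nat set \<Rightarrow> bool" where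
  "is_circuit B k J C \<longleftrightarrow> C \<subseteq> J \<and> \<not> lin_indep_forms B k C \<and> (\<forall>C'. C' \<subset> C \<longrightarrow> lin_indep_forms B k C')"

definition indepC :: "(nat \<Rightarrow> nat \<Rightarrow> int) \<Rightarrow> nat \<Rightarrow> nat set \<Rightarrow> bool" where
  "indepC b k S = lin_indep_forms (\<lambda>i j. (of_int (b i j) :: complex)) k S"

definition circuitsC :: "(nat \<Rightarrow> nat \<Rightarrow> int) \<Rightarrow> nat \<Rightarrow> nat \<Rightarrow> nat set set" where
  "circuitsC b k n = {C. is_circuit (\<lambda>i j. (of_int (b i j) :: complex)) k {1..n} C}"

definition circuitsP :: "'p::prime_card itself \<Rightarrow> (nat \<Rightarrow> nat \<Rightarrow> int) \<Rightarrow> nat \<Rightarrow> nat \<Rightarrow> nat set set" where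
  "circuitsP _ b k n = {C. is_circuit (\<lambda>i j. (of_int (b i j) :: 'p mod_ring)) k {1..n} C}"

text \<open>Independent k-subsets of J: the index set of the basis of V.\<close>
definition basis_idx :: "(nat \<Rightarrow> nat \<Rightarrow> int) \<Rightarrow> nat \<Rightarrow> nat \<Rightarrow> nat set set" where
  "basis_idx b k n = {S. S \<subseteq> {1..n} \<and> card S = k \<and> indepC b k S}"

text \<open>Sign of the permutation sorting a list of distinct numbers: (-1)^(#inversions).\<close>
definition sgn_list :: "nat list \<Rightarrow> 'f::comm_ring_1" where
  "sgn_list js = (-1) ^ card {(u, w). u < w \<and> w < length js \<and> js ! u > js ! w}"

text \<open>Elements of V are represented by their coordinate functions on the basis
  F(S), S an independent k-subset, F(S) = F(j_1,...,j_k) with j_1 < ... < j_k.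
  Fvec js is the vector F(j_1,...,j_k) for an arbitrary tuple js, using the sign rule;
  it is 0 if the entries are not distinct or not independent.\<close>
definition Fvec :: "(nat \<Rightarrow> nat \<Rightarrow> int) \<Rightarrow> nat \<Rightarrow> nat list \<Rightarrow> nat set \<Rightarrow> 'f::comm_ring_1" where
  "Fvec b k js T = (if distinct js \<and> indepC b k (set js) \<and> T = set js then sgn_list js else 0)"

text \<open>Skew-symmetric extension of the coordinates of v to all tuples.\<close>
definition Icoef :: "(nat \<Rightarrow> nat \<Rightarrow> int) \<Rightarrow> nat \<Rightarrow> (nat set \<Rightarrow> 'f::comm_ring_1) \<Rightarrow> nat list \<Rightarrow> 'f" where
  "Icoef b k v js = (if distinct js \<and> indepC b k (set js) then sgn_list js * v (set js) else 0)"

definition singular_vec :: "(nat \<Rightarrow> int) \<Rightarrow> (nat \<Rightarrow> nat \<Rightarrow> int) \<Rightarrow> nat \<Rightarrow> nat \<Rightarrow> (nat set \<Rightarrow> 'f::comm_ring_1) \<Rightarrow> bool" where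
  "singular_vec a b k n v \<longleftrightarrow>
     (\<forall>js. length js = k - 1 \<and> set js \<subseteq> {1..n} \<longrightarrow>
        (\<Sum>j\<in>{1..n}. of_int (a j) * Icoef b k v (j # js)) = 0)"

text \<open>Delete the l-th entry (1-based) of a list.\<close>
definition del_nth :: "nat \<Rightarrow> 'a list \<Rightarrow> 'a list" where
  "del_nth l xs = take (l - 1) xs @ drop l xs"

text \<open>[L]_C F(S) for a basis index S, as a vector (coordinate function).
  C = {i_1 < ... < i_r}; if S \<inter> C = C_m, write F(S) = eps F(C_m, s_1, ..., s_{k-r+1})
  with s sorted, and apply the defining formula.\<close>
definition LF :: "(nat \<Rightarrow> int) \<Rightarrow> (nat \<Rightarrow> nat \<Rightarrow> int) \<Rightarrow> nat \<Rightarrow> nat set \<Rightarrow> nat set \<Rightarrow> nat set \<Rightarrow> 'f::comm_ring_1" where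
  "LF a b k C S T =
     (if card (S \<inter> C) = card C - 1 \<and> \<not> C \<subseteq> S then
        (let cl = sorted_list_of_set C;
             m = (THE m. m \<in> {1..card C} \<and> S \<inter> C = C - {cl ! (m - 1)});
             sl = sorted_list_of_set (S - C);
             eps = (sgn_list (del_nth m cl @ sl) :: 'f)
         in eps * (-1) ^ m *
            (\<Sum>l=1..card C. (-1) ^ l * of_int (a (cl ! (l - 1))) * Fvec b k (del_nth l cl @ sl) T))
      else 0)"

definition Lop :: "(nat \<Rightarrow> int) \<Rightarrow> (nat \<Rightarrow> nat \<Rightarrow> int) \<Rightarrow> nat \<Rightarrow> nat \<Rightarrow> nat set \<Rightarrow> (nat set \<Rightarrow> 'f::comm_ring_1) \<Rightarrow> nat set \<Rightarrow> 'f" where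
  "Lop a b k n C v T = (\<Sum>S\<in>basis_idx b k n. v S * LF a b k C S T)"

definition fj :: "(nat \<Rightarrow> nat \<Rightarrow> int) \<Rightarrow> nat \<Rightarrow> (nat \<Rightarrow> 'f::comm_ring_1) \<Rightarrow> (nat \<Rightarrow> 'f) \<Rightarrow> nat \<Rightarrow> 'f" where
  "fj b k x t j = x j + (\<Sum>i=1..k. of_int (b i j) * t i)"

definition fC :: "(nat set \<Rightarrow> nat \<Rightarrow> int) \<Rightarrow> nat \<Rightarrow> (nat \<Rightarrow> 'f::comm_ring_1) \<Rightarrow> nat set \<Rightarrow> 'f" where
  "fC lam n x C = (\<Sum>i=1..n. of_int (lam C i) * x i)"

definition Kop :: "(nat \<Rightarrow> int) \<Rightarrow> (nat \<Rightarrow> nat \<Rightarrow> int) \<Rightarrow> (nat set \<Rightarrow> nat \<Rightarrow> int) \<Rightarrow> nat \<Rightarrow> nat \<Rightarrow>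
     (nat \<Rightarrow> 'f::field) \<Rightarrow> nat \<Rightarrow> (nat set \<Rightarrow> 'f) \<Rightarrow> nat set \<Rightarrow> 'f" where
  "Kop a b lam k n x i v T =
     (\<Sum>C\<in>circuitsC b k n. of_int (lam C i) / fC lam n x C * Lop a b k n C v T)"

definition dS :: "(nat \<Rightarrow> nat \<Rightarrow> int) \<Rightarrow> nat \<Rightarrow> nat set \<Rightarrow> int" where
  "dS b k S = det (mat k k (\<lambda>(i, l). b (Suc i) (sorted_list_of_set S ! l)))"

definition Fxt :: "(nat \<Rightarrow> nat \<Rightarrow> int) \<Rightarrow> nat \<Rightarrow> nat \<Rightarrow> (nat \<Rightarrow> 'f::field) \<Rightarrow> (nat \<Rightarrow> 'f) \<Rightarrow> nat set \<Rightarrow> 'f" where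
  "Fxt b k n x t S = (if S \<in> basis_idx b k n then of_int (dS b k S) / (\<Prod>j\<in>S. fj b k x t j) else 0)"

end

(* The singular vector equations: expanding each determinant d along the column of the free index
   writes every equation as a combination, with cofactor coefficients, of the Bethe ansatz equations.

   The eigenvalue equations are checked at each basis vector F(T). A circuit C contributes to the
   F(T)-coordinate of [K]_i F(x,t^0) only if C - T is a single index j, i.e. C is the fundamental
   circuit of j with respect to T, and then only through the k-sets obtained from T by exchanging
   j for another element of C. By Cramer's rule the signed k-minors of the k + 1 columns indexed
   by the union of C and T form a linear relation among them, which is proportional to lambda_C
   because k of these forms are independent. So the contributions add up to
   [f]_C(x) a_j / (lambda^j_C [f]_j) times the F(T)-coordinate, and [f]_C(x) cancels the
   denominator of [K]_i. What remains is the sum over j outside T of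
   (lambda^i_C / lambda^j_C) a_j / [f]_j, with C the fundamental circuit of j. It equals
   a_i / [f]_i: trivially if i is not in T, and otherwise because its difference from a_i / [f]_i
   is the coefficient of g_i in the Bethe ansatz equations rewritten in the basis T, which must
   vanish. *)

theory Submission
  imports Defs
begin

section \<open>Signs of lists\<close>

fun inversions :: "nat list \<Rightarrow> nat" where
  "inversions [] = 0"
| "inversions (x # xs) = length (filter (\<lambda>y. y < x) xs) + inversions xs"

lemma card_inversion_pairs:
  "card {(u, w). u < w \<and> w < length js \<and> js ! u > js ! w} = inversions js"
proof (induction js)
  case Nil
  then show ?case by simp
next
  case (Cons x xs)
  let ?A = "{(u, w). u < w \<and> w < length xs \<and> xs ! u > xs ! w}"
  let ?B = "{w. w < length xs \<and> xs ! w < x}"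
  have split: "{(u, w). u < w \<and> w < length (x # xs) \<and> (x # xs) ! u > (x # xs) ! w}
      = (\<lambda>w. (0::nat, Suc w)) ` ?B \<union> (\<lambda>(u, w). (Suc u, Suc w)) ` ?A"
    (is "?L = ?R")
  proof (rule equalityI)
    show "?L \<subseteq> ?R"
    proof
      fix p assume "p \<in> ?L"
      then obtain u w where p: "p = (u, w)"
        and h: "u < w" "w < length (x # xs)" "(x # xs) ! w < (x # xs) ! u"
        by blast
      show "p \<in> ?R"
      proof (cases u)
        case 0
        then show ?thesis using h p by (cases w) auto
      next
        case (Suc u')
        then obtain w' where "w = Suc w'" using h by (cases w) auto
        then show ?thesis using h Suc p by (intro UnI2 rev_image_eqI[of "(u', w')"]) auto
      qed
    qed
    show "?R \<subseteq> ?L" by auto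
  qed
  have "finite ?A"
    by (rule finite_subset[of _ "{..<length xs} \<times> {..<length xs}"]) auto
  then have "card ?R = card ((\<lambda>w. (0::nat, Suc w)) ` ?B) + card ((\<lambda>(u, w). (Suc u, Suc w)) ` ?A)"
    by (intro card_Un_disjoint) auto
  also have "\<dots> = card ?B + card ?A"
    by (subst card_image, force simp: inj_on_def)+ (rule refl)
  also have "card ?B = length (filter (\<lambda>y. y < x) xs)"
    by (simp add: length_filter_conv_card)
  finally show ?case using split Cons by simp
qed

lemma sgn_list_eq_inversions: "sgn_list js = ((-1) ^ inversions js :: 'a::comm_ring_1)"
  by (simp add: sgn_list_def card_inversion_pairs)

lemma inversions_swap:
  "a \<noteq> b \<Longrightarrow> inversions (xs @ b # a # ys) = inversions (xs @ a # b # ys) + 1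
    \<or> inversions (xs @ a # b # ys) = inversions (xs @ b # a # ys) + 1"
  by (induction xs) (auto simp: not_less_iff_gr_or_eq)

lemma sgn_list_swap:
  "a \<noteq> b \<Longrightarrow> (sgn_list (xs @ b # a # ys) :: 'a::comm_ring_1) = - sgn_list (xs @ a # b # ys)"
  unfolding sgn_list_eq_inversions using inversions_swap[of a b xs ys] by auto

lemma sgn_list_mult_self [simp]: "(sgn_list js :: 'a::comm_ring_1) * (sgn_list js * y) = y"
  unfolding sgn_list_eq_inversions by (simp add: mult.assoc[symmetric] power_mult_distrib[symmetric])

lemma sgn_list_sorted: "sorted js \<Longrightarrow> sgn_list js = 1"
proof -
  assume "sorted js"
  then have "inversions js = 0" by (induction js) (auto simp: filter_empty_conv not_less)
  then show ?thesis by (simp add: sgn_list_eq_inversions)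
qed

lemma swap_invariant_insort:
  assumes swap: "\<And>xs a b ys. length (xs @ a # b # ys) = k \<Longrightarrow> a \<noteq> b \<Longrightarrow>
      Q (xs @ b # a # ys) = Q (xs @ a # b # ys)"
  shows "length (pre @ x # ys) = k \<Longrightarrow> Q (pre @ x # ys) = Q (pre @ insort x ys)"
proof (induction ys arbitrary: pre)
  case Nil
  then show ?case by simp
next
  case (Cons y ys)
  show ?case
  proof (cases "x \<le> y")
    case True
    then show ?thesis by simp
  next
    case False
    have "Q (pre @ x # y # ys) = Q ((pre @ [y]) @ x # ys)"
      using swap[of pre y x ys] False Cons.prems by auto
    also have "\<dots> = Q ((pre @ [y]) @ insort x ys)" by (rule Cons.IH) (use Cons.prems in simp)
    finally show ?thesis using False by simp
  qed
qed

lemma swap_invariant_sort: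
  assumes swap: "\<And>xs a b ys. length (xs @ a # b # ys) = k \<Longrightarrow> a \<noteq> b \<Longrightarrow>
      Q (xs @ b # a # ys) = Q (xs @ a # b # ys)"
  shows "length (pre @ js) = k \<Longrightarrow> Q (pre @ js) = Q (pre @ sort js)"
proof (induction js arbitrary: pre)
  case Nil
  then show ?case by simp
next
  case (Cons x xs)
  have "Q (pre @ x # xs) = Q ((pre @ [x]) @ sort xs)"
    using Cons.IH[of "pre @ [x]"] Cons.prems by simp
  also have "\<dots> = Q (pre @ insort x (sort xs))"
    using swap_invariant_insort[of k Q pre x "sort xs", OF swap] Cons.prems by simp
  finally show ?case by simp
qed

lemma sgn_list_mult_alternating:
  fixes P :: "nat list \<Rightarrow> 'a::comm_ring_1"
  assumes alt: "\<And>xs a b ys. length (xs @ a # b # ys) = k \<Longrightarrow> a \<noteq> b \<Longrightarrow>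
      P (xs @ b # a # ys) = - P (xs @ a # b # ys)"
    and "length js = k"
  shows "sgn_list js * P js = P (sort js)"
proof -
  have "sgn_list (xs @ b # a # ys) * P (xs @ b # a # ys) = sgn_list (xs @ a # b # ys) * P (xs @ a # b # ys)"
    if "length (xs @ a # b # ys) = k" "a \<noteq> b" for xs a b ys
    by (simp add: sgn_list_swap[OF that(2)] alt[OF that])
  from swap_invariant_sort[of k "\<lambda>js. sgn_list js * P js" "[]" js, OF this] assms(2)
  show ?thesis by (simp add: sgn_list_sorted)
qed

section \<open>Determinants of column selections\<close>

definition col_mat :: "(nat \<Rightarrow> nat \<Rightarrow> 'a) \<Rightarrow> nat \<Rightarrow> nat list \<Rightarrow> 'a mat" where
  "col_mat B k js = mat k k (\<lambda>(i, l). B (Suc i) (js ! l))"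

definition col_det :: "(nat \<Rightarrow> nat \<Rightarrow> 'a::comm_ring_1) \<Rightarrow> nat \<Rightarrow> nat list \<Rightarrow> 'a" where
  "col_det B k js = det (col_mat B k js)"

lemma col_det_swap:
  assumes "length (xs @ a # b # ys) = k"
  shows "col_det B k (xs @ b # a # ys) = - col_det B k (xs @ a # b # ys)"
proof -
  let ?u = "length xs"
  have "col_mat B k (xs @ b # a # ys) = swapcols ?u (Suc ?u) (col_mat B k (xs @ a # b # ys))"
    by (rule eq_matI) (use assms in \<open>auto simp: col_mat_def nth_append nth_Cons split: nat.splits\<close>)
  moreover have "det (swapcols ?u (Suc ?u) (col_mat B k (xs @ a # b # ys)))
      = - det (col_mat B k (xs @ a # b # ys))"
    by (rule det_swapcols[where n = k]) (use assms in \<open>auto simp: col_mat_def\<close>)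
  ultimately show ?thesis unfolding col_det_def by simp
qed

lemma col_det_sort: "length js = k \<Longrightarrow> sgn_list js * col_det B k js = col_det B k (sort js)"
  by (rule sgn_list_mult_alternating[where k = k]) (auto intro: col_det_swap)

lemma col_det_of_int:
  "of_int (col_det B k js) = col_det (\<lambda>i j. of_int (B i j)) k js"
proof -
  have "map_mat of_int (col_mat B k js) = col_mat (\<lambda>i j. of_int (B i j)) k js"
    by (rule eq_matI) (auto simp: col_mat_def)
  then show ?thesis unfolding col_det_def
    using comm_ring_hom.hom_det[OF of_int_hom.comm_ring_hom_axioms] by metis
qed

lemma col_det_repeated:
  assumes "0 < k" "length js = k - 1" "j \<in> set js"
  shows "col_det B k (j # js) = 0"
proof -
  obtain u where u: "u < length js" "js ! u = j" using assms(3) by (auto simp: in_set_conv_nth)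
  have "col_mat B k (j # js) \<in> carrier_mat k k" by (simp add: col_mat_def)
  then show ?thesis unfolding col_det_def
    by (rule det_identical_columns[of _ k 0 "Suc u"]) (use u assms in \<open>auto simp: col_mat_def\<close>)
qed

lemma col_det_laplace_first:
  assumes "0 < k"
  shows "col_det B k (j # js) = (\<Sum>r<k. B (Suc r) j * cofactor (col_mat B k (0 # js)) r 0)"
proof -
  have M: "col_mat B k (j # js) \<in> carrier_mat k k" by (simp add: col_mat_def)
  have "col_det B k (j # js) = (\<Sum>r<k. col_mat B k (j # js) $$ (r, 0) * cofactor (col_mat B k (j # js)) r 0)"
    unfolding col_det_def by (rule laplace_expansion_column[OF M]) (use assms in simp)
  also have "\<dots> = (\<Sum>r<k. B (Suc r) j * cofactor (col_mat B k (0 # js)) r 0)"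
  proof (rule sum.cong[OF refl])
    fix r assume "r \<in> {..<k}"
    moreover have "mat_delete (col_mat B k (j # js)) r 0 = mat_delete (col_mat B k (0 # js)) r 0"
      by (rule eq_matI) (auto simp: mat_delete_def col_mat_def)
    ultimately show "col_mat B k (j # js) $$ (r, 0) * cofactor (col_mat B k (j # js)) r 0
        = B (Suc r) j * cofactor (col_mat B k (0 # js)) r 0"
      using assms by (simp add: cofactor_def col_mat_def)
  qed
  finally show ?thesis .
qed

lemma del_nth_nth:
  assumes "q < length L" "i < length L - 1"
  shows "del_nth (Suc q) L ! i = L ! (if i < q then i else Suc i)"
  using assms by (auto simp: del_nth_def nth_append min_def)

lemma length_del_nth: "1 \<le> l \<Longrightarrow> l \<le> length L \<Longrightarrow> length (del_nth l L) = length L - 1"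
  by (auto simp: del_nth_def min_def)

lemma del_nth_append: "1 \<le> l \<Longrightarrow> l \<le> length xs \<Longrightarrow> del_nth l (xs @ ys) = del_nth l xs @ ys"
  by (simp add: del_nth_def)

lemma set_del_nth:
  assumes "distinct xs" "1 \<le> l" "l \<le> length xs"
  shows "set (del_nth l xs) = set xs - {xs ! (l - 1)}" and "distinct (del_nth l xs)"
proof -
  define c where "c = xs ! (l - 1)"
  have xs: "xs = take (l - 1) xs @ c # drop l xs"
    using id_take_nth_drop[of "l - 1" xs] assms by (simp add: c_def)
  then have "distinct (take (l - 1) xs @ c # drop l xs)" using assms(1) by simp
  moreover have "set xs = set (take (l - 1) xs) \<union> insert c (set (drop l xs))"
    using xs by (metis set_append list.set(2))
  ultimately show "set (del_nth l xs) = set xs - {c}" "distinct (del_nth l xs)"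
    unfolding del_nth_def by auto
qed

(* Laplace expansion along the first row of a matrix whose first row repeats row i. *)
lemma col_det_cramer:
  fixes B :: "nat \<Rightarrow> nat \<Rightarrow> 'a::comm_ring_1"
  assumes len: "length L = Suc k" and i: "i \<in> {1..k}"
  shows "(\<Sum>q<Suc k. (-1) ^ q * col_det B k (del_nth (Suc q) L) * B i (L ! q)) = 0"
proof -
  define A where "A = mat (Suc k) (Suc k) (\<lambda>(r, q). if r = 0 then B i (L ! q) else B r (L ! q))"
  have A: "A \<in> carrier_mat (Suc k) (Suc k)" by (simp add: A_def)
  have "det A = 0"
    by (rule det_identical_rows[OF A, of 0 i]) (use i in \<open>auto simp: A_def row_def\<close>)
  moreover have "det A = (\<Sum>q<Suc k. A $$ (0, q) * cofactor A 0 q)"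
    by (rule laplace_expansion_row[OF A]) simp
  moreover have "mat_delete A 0 q = col_mat B k (del_nth (Suc q) L)" if "q < Suc k" for q
    by (rule eq_matI) (use that len in \<open>auto simp: mat_delete_def A_def col_mat_def del_nth_nth\<close>)
  ultimately show ?thesis
    by (auto simp: cofactor_def col_det_def A_def mult_ac)
qed

section \<open>Linear relations among linear forms\<close>

definition lin_indep_list :: "(nat \<Rightarrow> nat \<Rightarrow> 'a::field) \<Rightarrow> nat \<Rightarrow> nat list \<Rightarrow> bool" where
  "lin_indep_list B k js \<longleftrightarrow>
     (\<forall>c. (\<forall>i\<in>{1..k}. (\<Sum>q<length js. c q * B i (js ! q)) = 0) \<longrightarrow> (\<forall>q<length js. c q = 0))"

definition lin_rel :: "(nat \<Rightarrow> nat \<Rightarrow> 'a::field) \<Rightarrow> nat \<Rightarrow> (nat \<Rightarrow> 'a) \<Rightarrow> nat set \<Rightarrow> bool" where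
  "lin_rel B k c S \<longleftrightarrow> (\<forall>i\<in>{1..k}. (\<Sum>j\<in>S. c j * B i j) = 0)"

lemma col_mat_mult_vec:
  fixes B :: "nat \<Rightarrow> nat \<Rightarrow> 'a::comm_ring_1"
  assumes "i < k" "dim_vec v = k"
  shows "(col_mat B k js *\<^sub>v v) $ i = (\<Sum>q<k. v $ q * B (Suc i) (js ! q))"
  using assms by (auto simp: col_mat_def scalar_prod_def row_def atLeast0LessThan mult.commute intro!: sum.cong)

lemma col_det_nonzero_iff:
  fixes B :: "nat \<Rightarrow> nat \<Rightarrow> 'a::field"
  assumes len: "length js = k"
  shows "col_det B k js \<noteq> 0 \<longleftrightarrow> lin_indep_list B k js"
proof -
  have A: "col_mat B k js \<in> carrier_mat k k" by (simp add: col_mat_def)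
  have "col_det B k js = 0 \<longleftrightarrow> \<not> lin_indep_list B k js"
  proof
    assume "col_det B k js = 0"
    then obtain v where v: "v \<in> carrier_vec k" "v \<noteq> 0\<^sub>v k" "col_mat B k js *\<^sub>v v = 0\<^sub>v k"
      using det_0_iff_vec_prod_zero_field[OF A] unfolding col_det_def by blast
    have "\<forall>i\<in>{1..k}. (\<Sum>q<length js. v $ q * B i (js ! q)) = 0"
    proof
      fix i assume i: "i \<in> {1..k}"
      have "(col_mat B k js *\<^sub>v v) $ (i - 1) = 0" using v(3) i by auto
      then show "(\<Sum>q<length js. v $ q * B i (js ! q)) = 0"
        using col_mat_mult_vec[of "i - 1" k v B js] i v(1) len by auto
    qed
    moreover obtain q where "q < k" "v $ q \<noteq> 0" using v(1,2) by (auto simp: vec_eq_iff)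
    ultimately show "\<not> lin_indep_list B k js" unfolding lin_indep_list_def using len by auto
  next
    assume "\<not> lin_indep_list B k js"
    then obtain c q where rel: "\<forall>i\<in>{1..k}. (\<Sum>q<length js. c q * B i (js ! q)) = 0"
      and q: "q < length js" "c q \<noteq> 0" unfolding lin_indep_list_def by blast
    have "vec k c \<in> carrier_vec k" "vec k c \<noteq> 0\<^sub>v k" using q len by (auto simp: vec_eq_iff)
    moreover have "col_mat B k js *\<^sub>v vec k c = 0\<^sub>v k"
    proof (rule eq_vecI)
      fix i assume "i < dim_vec (0\<^sub>v k :: 'a vec)"
      then show "(col_mat B k js *\<^sub>v vec k c) $ i = 0\<^sub>v k $ i"
        using col_mat_mult_vec[of i k "vec k c" B js] rel len by auto
    qed (simp add: col_mat_def)
    ultimately show "col_det B k js = 0"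
      using det_0_iff_vec_prod_zero_field[OF A] unfolding col_det_def by blast
  qed
  then show ?thesis by blast
qed

lemma sum_set_conv_nth: "distinct js \<Longrightarrow> (\<Sum>j\<in>set js. f j) = (\<Sum>q<length js. f (js ! q))"
  by (simp add: sum_list_distinct_conv_sum_set[symmetric] sum_list_sum_nth atLeast0LessThan)

lemma lin_indep_forms_set_iff:
  assumes d: "distinct js"
  shows "lin_indep_forms B k (set js) \<longleftrightarrow> lin_indep_list B k js"
proof
  assume h: "lin_indep_forms B k (set js)"
  show "lin_indep_list B k js" unfolding lin_indep_list_def
  proof (intro allI impI)
    fix c q assume rel: "\<forall>i\<in>{1..k}. (\<Sum>q<length js. c q * B i (js ! q)) = 0" and q: "q < length js"
    define c' where "c' j = c (THE q. q < length js \<and> js ! q = j)" for j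
    have c': "c' (js ! q) = c q" if "q < length js" for q
    proof -
      have "(THE q'. q' < length js \<and> js ! q' = js ! q) = q"
        using that d by (auto simp: nth_eq_iff_index_eq)
      then show ?thesis by (simp add: c'_def)
    qed
    have "\<forall>i\<in>{1..k}. (\<Sum>j\<in>set js. c' j * B i j) = 0"
      using rel by (simp add: sum_set_conv_nth[OF d] c')
    then have "\<forall>j\<in>set js. c' j = 0" using h unfolding lin_indep_forms_def by blast
    then show "c q = 0" using q c'[OF q] by auto
  qed
next
  assume h: "lin_indep_list B k js"
  show "lin_indep_forms B k (set js)" unfolding lin_indep_forms_def
  proof (intro allI impI)
    fix c assume "\<forall>i\<in>{1..k}. (\<Sum>j\<in>set js. c j * B i j) = 0"
    then have "\<forall>i\<in>{1..k}. (\<Sum>q<length js. c (js ! q) * B i (js ! q)) = 0"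
      by (simp add: sum_set_conv_nth[OF d])
    then have "\<forall>q<length js. c (js ! q) = 0" using h unfolding lin_indep_list_def
      by (auto dest!: spec[of _ "\<lambda>q. c (js ! q)"])
    then show "\<forall>j\<in>set js. c j = 0" by (auto simp: in_set_conv_nth)
  qed
qed

lemma lin_indep_forms_iff_col_det:
  assumes "finite S" "card S = k"
  shows "lin_indep_forms B k S \<longleftrightarrow> col_det B k (sorted_list_of_set S) \<noteq> 0"
  using assms lin_indep_forms_set_iff[of "sorted_list_of_set S" B k]
    col_det_nonzero_iff[of "sorted_list_of_set S" k B] by simp

lemma lin_dep_iff_lin_rel: "\<not> lin_indep_forms B k S \<longleftrightarrow> (\<exists>c. lin_rel B k c S \<and> (\<exists>j\<in>S. c j \<noteq> 0))"
  unfolding lin_indep_forms_def lin_rel_def by blast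

lemma lin_indep_forms_rel_zero: "lin_indep_forms B k S \<Longrightarrow> lin_rel B k c S \<Longrightarrow> j \<in> S \<Longrightarrow> c j = 0"
  unfolding lin_indep_forms_def lin_rel_def by blast

lemma lin_rel_mono_neutral:
  assumes "finite S" "S' \<subseteq> S" "\<forall>j\<in>S - S'. c j = 0"
  shows "lin_rel B k c S \<longleftrightarrow> lin_rel B k c S'"
proof -
  have "(\<Sum>j\<in>S. c j * B i j) = (\<Sum>j\<in>S'. c j * B i j)" for i
    by (rule sum.mono_neutral_right) (use assms in auto)
  then show ?thesis unfolding lin_rel_def by simp
qed

lemma lin_rel_restrict:
  assumes "finite S" "S' \<subseteq> S" "lin_rel B k c S'"
  shows "lin_rel B k (\<lambda>j. if j \<in> S' then c j else 0) S"
proof -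
  have "lin_rel B k (\<lambda>j. if j \<in> S' then c j else 0) S'"
    using assms(3) unfolding lin_rel_def by (simp cong: sum.cong)
  then show ?thesis by (subst lin_rel_mono_neutral[OF assms(1,2)]) auto
qed

lemma lin_indep_forms_subset:
  assumes "finite S" "lin_indep_forms B k S" "S' \<subseteq> S"
  shows "lin_indep_forms B k S'"
proof (rule ccontr)
  assume "\<not> lin_indep_forms B k S'"
  then obtain c j where c: "lin_rel B k c S'" "j \<in> S'" "c j \<noteq> 0"
    unfolding lin_dep_iff_lin_rel by blast
  have "lin_rel B k (\<lambda>j. if j \<in> S' then c j else 0) S" by (rule lin_rel_restrict[OF assms(1,3) c(1)])
  then show False using lin_indep_forms_rel_zero[OF assms(2)] c assms(3) by force
qed

lemma lin_dep_insert_basis: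
  fixes B :: "nat \<Rightarrow> nat \<Rightarrow> 'a::field"
  assumes "finite T" "card T = k" "lin_indep_forms B k T" "j \<notin> T"
  shows "\<not> lin_indep_forms B k (insert j T)"
proof -
  define ts where "ts = sorted_list_of_set T"
  define L where "L = j # ts"
  have ts: "distinct ts" "set ts = T" "length ts = k" using assms(1,2) by (auto simp: ts_def)
  have L: "distinct L" "set L = insert j T" "length L = Suc k" using ts assms(4) by (auto simp: L_def)
  have "col_det B k (del_nth (Suc 0) L) \<noteq> 0"
    using lin_indep_forms_iff_col_det[OF assms(1,2), of B] assms(3) by (simp add: L_def ts_def del_nth_def)
  then have "\<not> lin_indep_list B k L"
    unfolding lin_indep_list_def using col_det_cramer[where B = B, OF L(3)] L(3)
    by (auto intro!: exI[of _ "\<lambda>q. (-1) ^ q * col_det B k (del_nth (Suc q) L)"] exI[of _ 0]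
        simp: mult.assoc)
  then show ?thesis using lin_indep_forms_set_iff[OF L(1), of B k] L(2) by simp
qed

lemma Diff_singleton_inj: "c \<in> A \<Longrightarrow> d \<in> A \<Longrightarrow> A - {c} = A - {d} \<Longrightarrow> c = d"
  by (metis Diff_iff singletonD singletonI)

lemma sum_lessThan_Suc_skip:
  assumes "l < Suc k"
  shows "(\<Sum>q<Suc k. g q) = g l + (\<Sum>q<k. g (if q < l then q else Suc q))"
proof -
  let ?idx = "\<lambda>q. if q < l then q else Suc q"
  have split: "{..<Suc k} = insert l (?idx ` {..<k})"
  proof (intro equalityI subsetI)
    fix q assume "q \<in> {..<Suc k}"
    then show "q \<in> insert l (?idx ` {..<k})"
      using assms by (cases "q < l"; cases "q = l") (auto simp: image_iff intro!: bexI[of _ "q - 1"])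
  qed (use assms in auto)
  have "sum g {..<Suc k} = g l + sum g (?idx ` {..<k})"
    unfolding split by (rule sum.insert) auto
  also have "sum g (?idx ` {..<k}) = sum (g \<circ> ?idx) {..<k}"
    by (rule sum.reindex) (auto simp: inj_on_def split: if_splits)
  finally show ?thesis by simp
qed

lemma lin_rel_proportional_minors:
  fixes B :: "nat \<Rightarrow> nat \<Rightarrow> 'a::field"
  assumes len: "length L = Suc k" and l: "l < Suc k"
    and nz: "col_det B k (del_nth (Suc l) L) \<noteq> 0"
    and \<mu>: "\<forall>i\<in>{1..k}. (\<Sum>q<Suc k. \<mu> q * B i (L ! q)) = 0"
    and E: "E = (\<lambda>q. (-1) ^ q * col_det B k (del_nth (Suc q) L))"
    and q: "q < Suc k"
  shows "\<mu> q * E l = \<mu> l * E q"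
proof -
  define \<nu> where "\<nu> q = \<mu> q * E l - \<mu> l * E q" for q
  let ?L' = "del_nth (Suc l) L" and ?idx = "\<lambda>q. if q < l then q else Suc q"
  have Erel: "\<forall>i\<in>{1..k}. (\<Sum>q<Suc k. E q * B i (L ! q)) = 0"
    using col_det_cramer[where B = B, OF len] unfolding E by (simp add: mult.assoc del: sum.lessThan_Suc)
  have \<nu>_rel: "(\<Sum>q<Suc k. \<nu> q * B i (L ! q)) = 0" if "i \<in> {1..k}" for i
  proof -
    have "(\<Sum>q<Suc k. \<nu> q * B i (L ! q))
        = E l * (\<Sum>q<Suc k. \<mu> q * B i (L ! q)) - \<mu> l * (\<Sum>q<Suc k. E q * B i (L ! q))"
      by (simp add: \<nu>_def sum_distrib_left sum_subtractf algebra_simps)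
    then show ?thesis using \<mu> Erel that by simp
  qed
  have \<nu>_l: "\<nu> l = 0" by (simp add: \<nu>_def mult.commute)
  have len': "length ?L' = k" using len l by (simp add: length_del_nth)
  have rel': "\<forall>i\<in>{1..k}. (\<Sum>q<length ?L'. \<nu> (?idx q) * B i (?L' ! q)) = 0"
  proof
    fix i assume i: "i \<in> {1..k}"
    have "(\<Sum>q<k. \<nu> (?idx q) * B i (?L' ! q)) = (\<Sum>q<k. (\<lambda>q. \<nu> q * B i (L ! q)) (?idx q))"
      by (rule sum.cong) (use len l in \<open>auto simp: del_nth_nth\<close>)
    also have "\<dots> = 0"
      using sum_lessThan_Suc_skip[OF l, of "\<lambda>q. \<nu> q * B i (L ! q)"] \<nu>_l \<nu>_rel[OF i] by simp
    finally show "(\<Sum>q<length ?L'. \<nu> (?idx q) * B i (?L' ! q)) = 0" using len' by simp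
  qed
  have "lin_indep_list B k ?L'" using nz col_det_nonzero_iff[OF len', of B] by simp
  then have "\<forall>q<k. \<nu> (?idx q) = 0"
    using rel' len' unfolding lin_indep_list_def by (auto dest!: spec[of _ "\<lambda>q. \<nu> (?idx q)"])
  then have "\<nu> q = 0"
  proof (cases "q < l")
    case True
    then show ?thesis using \<open>\<forall>q<k. \<nu> (?idx q) = 0\<close> l by (auto dest: spec[of _ q])
  next
    case False
    then have "q = l \<or> (q - 1 < k \<and> \<not> q - 1 < l \<and> Suc (q - 1) = q)" using q by auto
    then show ?thesis using \<open>\<forall>q<k. \<nu> (?idx q) = 0\<close> \<nu>_l by (metis)
  qed
  then show ?thesis by (simp add: \<nu>_def)
qed

section \<open>Circuits\<close>

lemma lin_dep_has_circuit:
  assumes "finite S" "S \<subseteq> J" "\<not> lin_indep_forms B k S"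
  shows "\<exists>C. is_circuit B k J C \<and> C \<subseteq> S"
  using assms
proof (induction "card S" arbitrary: S rule: less_induct)
  case less
  show ?case
  proof (cases "\<forall>C'. C' \<subset> S \<longrightarrow> lin_indep_forms B k C'")
    case True
    then show ?thesis using less.prems unfolding is_circuit_def by blast
  next
    case False
    then obtain S' where S': "S' \<subset> S" "\<not> lin_indep_forms B k S'" by blast
    then have "card S' < card S" "finite S'" "S' \<subseteq> J"
      using less.prems(1,2) by (auto simp: psubset_card_mono dest: finite_subset)
    then obtain C where "is_circuit B k J C" "C \<subseteq> S'" using less.hyps S'(2) by blast
    then show ?thesis using S'(1) by blast
  qed
qed

lemma lin_indep_forms_iff_no_circuit:
  assumes "finite S" "S \<subseteq> J"
  shows "lin_indep_forms B k S \<longleftrightarrow> \<not> (\<exists>C. is_circuit B k J C \<and> C \<subseteq> S)"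
proof
  assume indep: "lin_indep_forms B k S"
  show "\<not> (\<exists>C. is_circuit B k J C \<and> C \<subseteq> S)"
  proof
    assume "\<exists>C. is_circuit B k J C \<and> C \<subseteq> S"
    then obtain C where C: "is_circuit B k J C" "C \<subseteq> S" by blast
    have "lin_indep_forms B k C" by (rule lin_indep_forms_subset[OF assms(1) indep C(2)])
    then show False using C(1) unfolding is_circuit_def by simp
  qed
qed (use lin_dep_has_circuit[OF assms] in blast)

lemma circuit_lin_rel_nonzero:
  assumes C: "is_circuit B k J C" "finite C"
    and rel: "lin_rel B k c C" and nz: "\<exists>j\<in>C. c j \<noteq> 0" and j: "j \<in> C"
  shows "c j \<noteq> 0"
proof
  assume "c j = 0"
  define Z where "Z = {j\<in>C. c j \<noteq> 0}"
  have "Z \<subset> C" using \<open>c j = 0\<close> j by (auto simp: Z_def)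
  then have "lin_indep_forms B k Z" using C(1) unfolding is_circuit_def by simp
  moreover have "Z \<subseteq> C" "\<forall>j\<in>C - Z. c j = 0" by (auto simp: Z_def)
  then have "lin_rel B k c Z" using lin_rel_mono_neutral[OF C(2)] rel by blast
  ultimately have "\<forall>j\<in>Z. c j = 0" using lin_indep_forms_rel_zero by blast
  then show False using nz by (auto simp: Z_def)
qed

(* Two circuits inside T + j through j carry relations which, suitably scaled, agree at j;
   their difference is a relation on the independent set T, hence zero, so the supports agree. *)
lemma fundamental_circuit_unique:
  assumes T: "finite T" "lin_indep_forms B k T"
    and C1: "is_circuit B k J C1" "C1 \<subseteq> insert j T" "j \<in> C1"
    and C2: "is_circuit B k J C2" "C2 \<subseteq> insert j T" "j \<in> C2"
  shows "C1 = C2"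
proof -
  have fin: "finite C1" "finite C2" using C1(2) C2(2) T(1) finite_subset by auto
  obtain c1 where c1: "lin_rel B k c1 C1" "\<exists>j\<in>C1. c1 j \<noteq> 0"
    using C1(1) unfolding is_circuit_def lin_dep_iff_lin_rel by blast
  obtain c2 where c2: "lin_rel B k c2 C2" "\<exists>j\<in>C2. c2 j \<noteq> 0"
    using C2(1) unfolding is_circuit_def lin_dep_iff_lin_rel by blast
  define e1 where "e1 m = (if m \<in> C1 then c1 m else 0)" for m
  define e2 where "e2 m = (if m \<in> C2 then c2 m else 0)" for m
  have e1: "e1 m \<noteq> 0 \<longleftrightarrow> m \<in> C1" for m
    using circuit_lin_rel_nonzero[OF C1(1) fin(1) c1] by (auto simp: e1_def)
  have e2: "e2 m \<noteq> 0 \<longleftrightarrow> m \<in> C2" for m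
    using circuit_lin_rel_nonzero[OF C2(1) fin(2) c2] by (auto simp: e2_def)
  have r1: "lin_rel B k e1 (insert j T)"
    unfolding e1_def by (rule lin_rel_restrict[OF _ C1(2) c1(1)]) (use T in simp)
  have r2: "lin_rel B k e2 (insert j T)"
    unfolding e2_def by (rule lin_rel_restrict[OF _ C2(2) c2(1)]) (use T in simp)
  define d where "d m = e2 j * e1 m - e1 j * e2 m" for m
  have "lin_rel B k d (insert j T)" unfolding lin_rel_def
  proof
    fix i assume "i \<in> {1..k}"
    have "(\<Sum>m\<in>insert j T. d m * B i m)
        = e2 j * (\<Sum>m\<in>insert j T. e1 m * B i m) - e1 j * (\<Sum>m\<in>insert j T. e2 m * B i m)"
      by (simp only: d_def left_diff_distrib sum_subtractf sum_distrib_left mult.assoc)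
    then show "(\<Sum>m\<in>insert j T. d m * B i m) = 0" using r1 r2 \<open>i \<in> {1..k}\<close> unfolding lin_rel_def by simp
  qed
  moreover have "\<forall>m\<in>insert j T - T. d m = 0" by (auto simp: d_def mult.commute)
  ultimately have "lin_rel B k d T" using lin_rel_mono_neutral[of "insert j T" T d] T(1) by auto
  then have scaled: "e2 j * e1 m = e1 j * e2 m" if "m \<in> T" for m
    using lin_indep_forms_rel_zero[OF T(2), of d m] that by (simp add: d_def)
  have "e1 j \<noteq> 0" "e2 j \<noteq> 0" using e1 e2 C1(3) C2(3) by auto
  then have "e1 m \<noteq> 0 \<longleftrightarrow> e2 m \<noteq> 0" if "m \<in> T" for m
    using scaled[OF that] by (metis mult_eq_0_iff)
  then have "m \<in> C1 \<longleftrightarrow> m \<in> C2" if "m \<in> insert j T" for m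
    using that C1(3) C2(3) by (cases "m = j") (simp_all add: e1[symmetric] e2[symmetric])
  then show ?thesis using C1(2) C2(2) by blast
qed

section \<open>The Bethe vector and the singular vector equations\<close>

locale bethe_ansatz =
  fixes n k :: nat
    and b :: "nat \<Rightarrow> nat \<Rightarrow> int"
    and lam :: "nat set \<Rightarrow> nat \<Rightarrow> int"
    and a :: "nat \<Rightarrow> int"
    and x t0 :: "nat \<Rightarrow> 'p::prime_card mod_ring"
  assumes k_pos: "0 < k"
    and lam_outside: "C \<in> circuitsC b k n \<Longrightarrow> i \<notin> C \<Longrightarrow> lam C i = 0"
    and lam_relation: "C \<in> circuitsC b k n \<Longrightarrow> l \<in> {1..k} \<Longrightarrow> (\<Sum>i\<in>C. lam C i * b l i) = 0"
    and good_C: "\<forall>C\<in>circuitsC b k n. \<exists>i\<in>C. (of_int (lam C i) :: 'p mod_ring) \<noteq> 0"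
    and good_circuits: "circuitsP TYPE('p) b k n = circuitsC b k n"
    and x_gen: "\<forall>C\<in>circuitsC b k n. fC lam n x C \<noteq> 0"
    and t0_gen: "\<forall>j\<in>{1..n}. fj b k x t0 j \<noteq> 0"
    and bethe: "\<forall>i\<in>{1..k}. (\<Sum>j\<in>{1..n}. of_int (b i j) * of_int (a j) / fj b k x t0 j) = 0"
begin

abbreviation bp :: "nat \<Rightarrow> nat \<Rightarrow> 'p mod_ring" where "bp i j \<equiv> of_int (b i j)"
abbreviation lamp :: "nat set \<Rightarrow> nat \<Rightarrow> 'p mod_ring" where "lamp C i \<equiv> of_int (lam C i)"
abbreviation f :: "nat \<Rightarrow> 'p mod_ring" where "f \<equiv> fj b k x t0"
abbreviation v :: "nat set \<Rightarrow> 'p mod_ring" where "v \<equiv> Fxt b k n x t0"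
abbreviation circ :: "nat set set" where "circ \<equiv> circuitsC b k n"
abbreviation basis :: "nat set set" where "basis \<equiv> basis_idx b k n"

lemma circ_eq_circuits_mod_p: "circ = {C. is_circuit bp k {1..n} C}"
  using good_circuits unfolding circuitsP_def by simp

lemma circ_subset: "C \<in> circ \<Longrightarrow> C \<subseteq> {1..n}"
  unfolding circuitsC_def is_circuit_def by simp

lemma finite_circ: "finite circ"
  by (rule finite_subset[of _ "Pow {1..n}"]) (use circ_subset in auto)

lemma finite_circuit: "C \<in> circ \<Longrightarrow> finite C"
  using circ_subset finite_subset by blast

lemma indepC_iff_mod_p:
  assumes "S \<subseteq> {1..n}"
  shows "indepC b k S \<longleftrightarrow> lin_indep_forms bp k S"
proof -
  have fS: "finite S" using assms finite_subset by blast
  have "indepC b k S \<longleftrightarrow> \<not> (\<exists>C. C \<in> circ \<and> C \<subseteq> S)"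
    unfolding indepC_def circuitsC_def using lin_indep_forms_iff_no_circuit[OF fS assms] by simp
  also have "\<dots> \<longleftrightarrow> lin_indep_forms bp k S"
    unfolding circ_eq_circuits_mod_p using lin_indep_forms_iff_no_circuit[OF fS assms, of bp k] by auto
  finally show ?thesis .
qed

lemma basis_iff: "S \<in> basis \<longleftrightarrow> S \<subseteq> {1..n} \<and> card S = k \<and> lin_indep_forms bp k S"
  unfolding basis_idx_def using indepC_iff_mod_p by blast

lemma basis_finite: "S \<in> basis \<Longrightarrow> finite S"
  by (rule finite_subset[of _ "{1..n}"]) (simp_all add: basis_iff)

lemma finite_basis: "finite basis"
  by (rule finite_subset[of _ "Pow {1..n}"]) (use basis_iff in auto)

lemma Fxt_eq:
  "v S = (if S \<subseteq> {1..n} \<and> card S = k then col_det bp k (sorted_list_of_set S) / (\<Prod>j\<in>S. f j) else 0)"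
proof -
  have "of_int (dS b k S) = col_det bp k (sorted_list_of_set S)"
    using col_det_of_int[of b k "sorted_list_of_set S"] by (simp add: dS_def col_det_def col_mat_def)
  moreover have "S \<subseteq> {1..n} \<Longrightarrow> card S = k \<Longrightarrow>
      lin_indep_forms bp k S \<longleftrightarrow> col_det bp k (sorted_list_of_set S) \<noteq> 0"
    using finite_subset lin_indep_forms_iff_col_det by blast
  ultimately show ?thesis by (auto simp: Fxt_def basis_iff)
qed

lemma col_det_lin_dep:
  assumes "distinct js" "length js = k" "\<not> lin_indep_forms bp k (set js)"
  shows "col_det bp k js = 0"
proof -
  have "col_det bp k (sort js) = 0"
    using assms lin_indep_forms_iff_col_det[of "set js" k bp]
    by (simp add: distinct_card sorted_list_of_set_sort_remdups distinct_remdups_id)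
  then have "sgn_list js * (sgn_list js * col_det bp k js) = 0"
    using col_det_sort[OF assms(2), of bp] by (simp only: mult_zero_right)
  then show ?thesis by (simp only: sgn_list_mult_self)
qed

lemma sgn_list_mult_Fxt:
  assumes "distinct js" "length js = k" "set js \<subseteq> {1..n}"
  shows "sgn_list js * v (set js) = col_det bp k js / (\<Prod>j\<in>set js. f j)"
proof -
  have "card (set js) = k" using assms by (simp add: distinct_card)
  moreover have "sorted_list_of_set (set js) = sort js"
    using assms by (simp add: sorted_list_of_set_sort_remdups distinct_remdups_id)
  moreover have "sgn_list js * col_det bp k (sort js) = col_det bp k js"
    using col_det_sort[OF assms(2), of bp] by (metis sgn_list_mult_self)
  ultimately show ?thesis using Fxt_eq[of "set js"] assms(3) by (simp add: times_divide_eq_right)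
qed

lemma Icoef_Fxt:
  assumes "length js = k - 1" "set js \<subseteq> {1..n}" "distinct js" "j \<in> {1..n}"
  shows "Icoef b k v (j # js) = col_det bp k (j # js) / (f j * (\<Prod>i\<in>set js. f i))"
proof (cases "j \<in> set js")
  case True
  then show ?thesis using col_det_repeated[OF k_pos assms(1) True, of bp] by (simp add: Icoef_def)
next
  case False
  then have js: "distinct (j # js)" "length (j # js) = k" "set (j # js) \<subseteq> {1..n}"
    using assms k_pos by auto
  show ?thesis
  proof (cases "indepC b k (set (j # js))")
    case True
    then show ?thesis using sgn_list_mult_Fxt[OF js] False js(1) by (simp add: Icoef_def)
  next
    case False
    then show ?thesis
      using col_det_lin_dep[OF js(1,2)] indepC_iff_mod_p[OF js(3)] by (simp add: Icoef_def)
  qed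
qed

(* Expand each determinant along the column of the summation index: every cofactor then
   multiplies one Bethe ansatz equation. *)
lemma singular_vec_Fxt: "singular_vec a b k n v"
  unfolding singular_vec_def
proof (intro allI impI)
  fix js :: "nat list" assume "length js = k - 1 \<and> set js \<subseteq> {1..n}"
  then have len: "length js = k - 1" and sub: "set js \<subseteq> {1..n}" by auto
  show "(\<Sum>j\<in>{1..n}. of_int (a j) * Icoef b k v (j # js)) = 0"
  proof (cases "distinct js")
    case False
    then show ?thesis by (simp add: Icoef_def)
  next
    case True
    define P where "P = (\<Prod>i\<in>set js. f i)"
    define cof where "cof r = cofactor (col_mat bp k (0 # js)) r 0" for r
    have "(\<Sum>j\<in>{1..n}. of_int (a j) * Icoef b k v (j # js))
        = (\<Sum>j\<in>{1..n}. \<Sum>r<k. cof r / P * (bp (Suc r) j * of_int (a j) / f j))"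
    proof (rule sum.cong[OF refl])
      fix j assume "j \<in> {1..n}"
      then have "of_int (a j) * Icoef b k v (j # js)
          = of_int (a j) * ((\<Sum>r<k. bp (Suc r) j * cof r) / (f j * P))"
        using Icoef_Fxt[OF len sub True] col_det_laplace_first[OF k_pos, of bp j js]
        by (simp add: P_def cof_def)
      also have "\<dots> = (\<Sum>r<k. cof r / P * (bp (Suc r) j * of_int (a j) / f j))"
        by (simp add: sum_divide_distrib sum_distrib_left algebra_simps)
      finally show "of_int (a j) * Icoef b k v (j # js)
          = (\<Sum>r<k. cof r / P * (bp (Suc r) j * of_int (a j) / f j))" .
    qed
    also have "\<dots> = (\<Sum>r<k. cof r / P * (\<Sum>j\<in>{1..n}. bp (Suc r) j * of_int (a j) / f j))"
      by (simp only: sum.swap[of _ "{1..n}"] sum_distrib_left)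
    also have "\<dots> = 0" using bethe by simp
    finally show ?thesis .
  qed
qed

end

section \<open>Circuits modulo p and the operators L\<close>

context bethe_ansatz
begin

lemma circuit_mod_p: "C \<in> circ \<Longrightarrow> is_circuit bp k {1..n} C"
  by (simp add: circ_eq_circuits_mod_p)

lemma lin_rel_lamp:
  assumes "C \<in> circ"
  shows "lin_rel bp k (lamp C) C"
  unfolding lin_rel_def
proof
  fix l assume "l \<in> {1..k}"
  have "(\<Sum>i\<in>C. lamp C i * bp l i) = of_int (\<Sum>i\<in>C. lam C i * b l i)" by simp
  also have "\<dots> = 0" using lam_relation[OF assms \<open>l \<in> {1..k}\<close>] by simp
  finally show "(\<Sum>i\<in>C. lamp C i * bp l i) = 0" .
qed

lemma lamp_outside: "C \<in> circ \<Longrightarrow> i \<notin> C \<Longrightarrow> lamp C i = 0"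
  by (simp add: lam_outside)

lemma lamp_nonzero:
  assumes C: "C \<in> circ" and i: "i \<in> C"
  shows "lamp C i \<noteq> 0"
  using circuit_lin_rel_nonzero[OF circuit_mod_p[OF C] finite_circuit[OF C] lin_rel_lamp[OF C]
      bspec[OF good_C C] i] .

lemma fC_eq_sum_f:
  assumes C: "C \<in> circ"
  shows "fC lam n x C = (\<Sum>c\<in>C. lamp C c * f c)"
proof -
  have "fC lam n x C = (\<Sum>c\<in>C. lamp C c * x c)"
    unfolding fC_def by (rule sum.mono_neutral_right) (use circ_subset[OF C] lamp_outside[OF C] in auto)
  moreover have "(\<Sum>c\<in>C. lamp C c * f c)
      = (\<Sum>c\<in>C. lamp C c * x c) + (\<Sum>r=1..k. t0 r * (\<Sum>c\<in>C. lamp C c * bp r c))"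
  proof -
    have "(\<Sum>c\<in>C. lamp C c * f c)
        = (\<Sum>c\<in>C. lamp C c * x c) + (\<Sum>c\<in>C. \<Sum>r=1..k. t0 r * (lamp C c * bp r c))"
      unfolding fj_def by (simp only: distrib_left sum.distrib sum_distrib_left mult.commute mult.left_commute)
    also have "(\<Sum>c\<in>C. \<Sum>r=1..k. t0 r * (lamp C c * bp r c)) = (\<Sum>r=1..k. \<Sum>c\<in>C. t0 r * (lamp C c * bp r c))"
      by (rule sum.swap)
    finally show ?thesis by (simp only: sum_distrib_left)
  qed
  moreover have "(\<Sum>c\<in>C. lamp C c * bp r c) = 0" if "r \<in> {1..k}" for r
    using lin_rel_lamp[OF C] that unfolding lin_rel_def by blast
  ultimately show ?thesis by simp
qed

definition LF_index :: "nat set \<Rightarrow> nat set \<Rightarrow> nat" where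
  "LF_index C S = (THE m. m \<in> {1..card C} \<and> S \<inter> C = C - {sorted_list_of_set C ! (m - 1)})"

definition LF_sum :: "nat set \<Rightarrow> nat set \<Rightarrow> nat set \<Rightarrow> 'p mod_ring" where
  "LF_sum C S T = (\<Sum>l=1..card C. (-1) ^ l * of_int (a (sorted_list_of_set C ! (l - 1))) *
      Fvec b k (del_nth l (sorted_list_of_set C) @ sorted_list_of_set (S - C)) T)"

lemma LF_unfold:
  assumes "card (S \<inter> C) = card C - 1" "\<not> C \<subseteq> S"
  shows "LF a b k C S T
    = sgn_list (del_nth (LF_index C S) (sorted_list_of_set C) @ sorted_list_of_set (S - C))
      * (-1) ^ LF_index C S * LF_sum C S T"
  unfolding LF_def Let_def LF_index_def LF_sum_def using assms by (simp only: if_True conj_absorb simp_thms)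

lemma LF_nonzero_cases:
  assumes "LF a b k C S T \<noteq> (0::'p mod_ring)"
  shows "card (S \<inter> C) = card C - 1" "\<not> C \<subseteq> S"
proof -
  have "card (S \<inter> C) = card C - 1 \<and> \<not> C \<subseteq> S"
  proof (rule ccontr)
    assume "\<not> (card (S \<inter> C) = card C - 1 \<and> \<not> C \<subseteq> S)"
    then have "LF a b k C S T = (0::'p mod_ring)" unfolding LF_def by (simp only: if_False)
    then show False using assms by simp
  qed
  then show "card (S \<inter> C) = card C - 1" "\<not> C \<subseteq> S" by auto
qed

lemma LF_nonzero_exchange:
  assumes C: "C \<in> circ" and S: "S \<in> basis" and nz: "LF a b k C S T \<noteq> (0::'p mod_ring)"
  shows "T \<in> basis" "\<exists>j. C - T = {j}" "S - C = T - C"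
proof -
  define cl where "cl = sorted_list_of_set C"
  define sl where "sl = sorted_list_of_set (S - C)"
  have fC: "finite C" using finite_circuit[OF C] .
  have S': "S \<subseteq> {1..n}" "card S = k" "finite S" using S basis_iff basis_finite by auto
  have cl: "distinct cl" "set cl = C" "length cl = card C" using fC by (auto simp: cl_def)
  have sl: "distinct sl" "set sl = S - C" "length sl = card (S - C)" using S'(3) by (auto simp: sl_def)
  have cond: "card (S \<inter> C) = card C - 1" "\<not> C \<subseteq> S" using LF_nonzero_cases[OF nz] by auto
  have "LF_sum C S T \<noteq> 0" using nz LF_unfold[OF cond, of T] by auto
  then obtain l where l: "l \<in> {1..card C}"
    and "(-1) ^ l * of_int (a (cl ! (l - 1))) * Fvec b k (del_nth l cl @ sl) T \<noteq> (0::'p mod_ring)"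
    unfolding LF_sum_def cl_def[symmetric] sl_def[symmetric]
    by (blast dest: sum.not_neutral_contains_not_neutral)
  then have "Fvec b k (del_nth l cl @ sl) T \<noteq> (0::'p mod_ring)" by auto
  then have T: "T = set (del_nth l cl @ sl)" "distinct (del_nth l cl @ sl)" "indepC b k T"
    unfolding Fvec_def by (auto split: if_splits)
  have dl: "set (del_nth l cl) = C - {cl ! (l - 1)}" "length (del_nth l cl) = card C - 1"
    using set_del_nth[OF cl(1), of l] l cl by (auto simp: length_del_nth)
  have T_eq: "T = (C - {cl ! (l - 1)}) \<union> (S - C)" using T(1) dl sl by simp
  have jC: "cl ! (l - 1) \<in> C" using l cl by (auto intro!: nth_mem)
  have "card (S - C) = card S - card (S \<inter> C)" "card (S \<inter> C) \<le> card S"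
    by (simp_all add: card_Diff_subset_Int S'(3) card_mono)
  moreover have "card C \<ge> 1" using cond(2) fC by (cases "C = {}") (auto simp: Suc_le_eq card_gt_0_iff)
  ultimately have "card T = k"
    using dl sl(3) cond(1) S'(2) distinct_card[OF T(2)] T(1) by simp
  moreover have "T \<subseteq> {1..n}" using T_eq circ_subset[OF C] S'(1) by auto
  ultimately show "T \<in> basis" using T(3) unfolding basis_idx_def by blast
  show "\<exists>j. C - T = {j}" using T_eq jC by auto
  show "S - C = T - C" using T_eq by auto
qed

lemma Lop_eq_zero:
  assumes "C \<in> circ" "\<not> (T \<in> basis \<and> (\<exists>j. C - T = {j}))"
  shows "Lop a b k n C v T = 0"
  unfolding Lop_def
proof (rule sum.neutral, rule ballI)
  fix S assume "S \<in> basis"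
  then show "v S * LF a b k C S T = 0"
    using LF_nonzero_exchange[OF assms(1)] assms(2) by (cases "LF a b k C S T = (0::'p mod_ring)") auto
qed

end

section \<open>L applied to the Bethe vector\<close>

locale circuit_exchange = bethe_ansatz n k b lam a x t0
  for n k b lam a and x t0 :: "nat \<Rightarrow> 'p::prime_card mod_ring" +
  fixes C T :: "nat set" and j :: nat
  assumes C_circ: "C \<in> circ" and T_basis: "T \<in> basis" and C_diff_T: "C - T = {j}"
begin

definition cl :: "nat list" where "cl = sorted_list_of_set C"

(* exch q is the argument list (i_1, ..., omit i_(q+1), ..., i_r, s_1, ..., s_(k-r+1)) from the
   definition of L_C, with s the elements of T - C; positions in C are 0-based, so L_C pairs exch q
   with the sign (-1)^(q+1). *)
definition exch :: "nat \<Rightarrow> nat list" where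
  "exch q = del_nth (Suc q) cl @ sorted_list_of_set (T - C)"

definition jpos :: nat where "jpos = (THE q. q < card C \<and> cl ! q = j)"

lemma finite_C: "finite C"
  using finite_circuit[OF C_circ] .

lemma T_props: "T \<subseteq> {1..n}" "card T = k" "lin_indep_forms bp k T" "finite T"
proof -
  show T: "T \<subseteq> {1..n}" "card T = k" "lin_indep_forms bp k T" using T_basis basis_iff by simp_all
  show "finite T" using basis_finite[OF T_basis] .
qed

lemma j_mem: "j \<in> C" "j \<notin> T"
  using C_diff_T by auto

lemma distinct_cl: "distinct cl" and set_cl: "set cl = C" and length_cl: "length cl = card C"
  using finite_C by (auto simp: cl_def)

lemma cl_nth_eq_iff: "q < card C \<Longrightarrow> q' < card C \<Longrightarrow> cl ! q = cl ! q' \<longleftrightarrow> q = q'"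
  using nth_eq_iff_index_eq[OF distinct_cl] length_cl by simp

lemma cl_nth_mem: "q < card C \<Longrightarrow> cl ! q \<in> C"
  using nth_mem[of q cl] set_cl length_cl by simp

lemma jpos: "jpos < card C" "cl ! jpos = j"
proof -
  obtain q where q: "q < card C" "cl ! q = j" using j_mem(1) set_cl length_cl by (metis in_set_conv_nth)
  have "jpos = q" unfolding jpos_def
  proof (rule the_equality)
    fix q' assume "q' < card C \<and> cl ! q' = j"
    then show "q' = q" using q cl_nth_eq_iff[of q' q] by simp
  qed (use q in simp)
  then show "jpos < card C" "cl ! jpos = j" using q by auto
qed

lemma card_C_pos: "0 < card C"
  using j_mem(1) finite_C card_gt_0_iff by blast

lemma card_exchange: "card C - 1 + card (T - C) = k"
proof -
  have "T \<inter> C = C - {j}" using C_diff_T by auto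
  then have "card (T \<inter> C) = card C - 1" using finite_C j_mem(1) by simp
  moreover have "card (T - C) = card T - card (T \<inter> C)" "card (T \<inter> C) \<le> card T"
    by (simp_all add: card_Diff_subset_Int T_props(4) card_mono)
  ultimately show ?thesis using T_props(2) by simp
qed

lemma exch_props:
  assumes "q < card C"
  shows "set (exch q) = (C - {cl ! q}) \<union> (T - C)" "distinct (exch q)" "length (exch q) = k"
    "set (exch q) \<subseteq> {1..n}"
proof -
  have "set (del_nth (Suc q) cl) = C - {cl ! q}" "distinct (del_nth (Suc q) cl)"
    using set_del_nth[OF distinct_cl, of "Suc q"] assms set_cl length_cl by auto
  then show "set (exch q) = (C - {cl ! q}) \<union> (T - C)" "distinct (exch q)"
    using T_props(4) by (auto simp: exch_def)
  show "length (exch q) = k"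
    using assms length_cl card_exchange T_props(4) by (simp add: exch_def length_del_nth)
  show "set (exch q) \<subseteq> {1..n}"
    using \<open>set (exch q) = _\<close> circ_subset[OF C_circ] T_props(1) by auto
qed

lemma set_exch_jpos: "set (exch jpos) = T"
  using exch_props(1)[OF jpos(1)] jpos(2) C_diff_T by auto

lemma inj_on_set_exch: "inj_on (\<lambda>q. set (exch q)) {..<card C}"
proof (rule inj_onI)
  fix q q' assume q: "q \<in> {..<card C}" "q' \<in> {..<card C}" "set (exch q) = set (exch q')"
  then have "C - {cl ! q} = C - {cl ! q'}" using exch_props(1) by auto
  then have "cl ! q = cl ! q'" using Diff_singleton_inj cl_nth_mem q(1,2) by (metis lessThan_iff)
  then show "q = q'" using cl_nth_eq_iff q(1,2) by auto
qed

lemma LF_nonzero_imp_exch: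
  assumes S: "S \<in> basis" and nz: "LF a b k C S T \<noteq> (0::'p mod_ring)"
  shows "S \<in> (\<lambda>q. set (exch q)) ` {..<card C}"
proof -
  have "card (C - S) = card C - card (C \<inter> S)" by (rule card_Diff_subset_Int) (simp add: finite_C)
  then have "card (C - S) = 1"
    using LF_nonzero_cases(1)[OF nz] card_C_pos by (simp add: Int_commute)
  then obtain c where c: "C - S = {c}" by (auto simp: card_Suc_eq)
  then obtain q where q: "q < card C" "cl ! q = c"
    using set_cl length_cl by (metis Diff_iff in_set_conv_nth insertI1)
  have "S = (S \<inter> C) \<union> (S - C)" by blast
  also have "S \<inter> C = C - {c}" using c by blast
  also have "S - C = T - C" by (rule LF_nonzero_exchange(3)[OF C_circ S nz])
  finally have "S = set (exch q)" using exch_props(1)[OF q(1)] q(2) by simp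
  then show ?thesis using q(1) by (intro image_eqI[of _ _ q]) simp_all
qed

lemma Lop_eq_sum_exch:
  "Lop a b k n C v T = (\<Sum>q<card C. v (set (exch q)) * LF a b k C (set (exch q)) T)"
proof -
  let ?E = "(\<lambda>q. set (exch q)) ` {..<card C}" and ?g = "\<lambda>S. v S * LF a b k C S T"
  have "Lop a b k n C v T = (\<Sum>S\<in>basis \<inter> ?E. ?g S)"
    unfolding Lop_def
  proof (rule sum.mono_neutral_right[OF finite_basis])
    show "\<forall>S\<in>basis - basis \<inter> ?E. ?g S = 0" using LF_nonzero_imp_exch by fastforce
  qed blast
  also have "\<dots> = (\<Sum>S\<in>?E. ?g S)"
  proof (rule sum.mono_neutral_left)
    show "\<forall>S\<in>?E - basis \<inter> ?E. ?g S = 0"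
    proof
      fix S assume "S \<in> ?E - basis \<inter> ?E"
      then have "S \<notin> basis" by blast
      then show "?g S = 0" by (simp add: Fxt_def)
    qed
  qed auto
  also have "\<dots> = (\<Sum>q<card C. v (set (exch q)) * LF a b k C (set (exch q)) T)"
    by (rule sum.reindex[OF inj_on_set_exch, unfolded comp_def])
  finally show ?thesis .
qed

lemma LF_index_exch:
  assumes q: "q < card C"
  shows "LF_index C (set (exch q)) = Suc q"
  unfolding LF_index_def cl_def[symmetric]
proof (rule the_equality)
  have Sq: "set (exch q) \<inter> C = C - {cl ! q}" using exch_props(1)[OF q] by blast
  then show "Suc q \<in> {1..card C} \<and> set (exch q) \<inter> C = C - {cl ! (Suc q - 1)}" using q by simp
  fix m assume m: "m \<in> {1..card C} \<and> set (exch q) \<inter> C = C - {cl ! (m - 1)}"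
  then have "1 \<le> m" "m \<le> card C" by simp_all
  then have m': "m - 1 < card C" "Suc (m - 1) = m" by simp_all
  have "C - {cl ! q} = C - {cl ! (m - 1)}" using Sq conjunct2[OF m] by simp
  then have "cl ! q = cl ! (m - 1)"
    by (rule Diff_singleton_inj[OF cl_nth_mem[OF q] cl_nth_mem[OF m'(1)]])
  then show "m = Suc q" using cl_nth_eq_iff[OF q m'(1)] m'(2) by simp
qed

lemma Fvec_exch:
  assumes "q < card C"
  shows "Fvec b k (exch q) T = (if q = jpos then sgn_list (exch jpos) else (0::'p mod_ring))"
proof (cases "q = jpos")
  case True
  have "indepC b k T" using T_basis unfolding basis_idx_def by simp
  then show ?thesis using True set_exch_jpos exch_props(2)[OF assms] by (simp add: Fvec_def)
next
  case False
  then have "j \<in> set (exch q)"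
    using exch_props(1)[OF assms] j_mem(1) jpos cl_nth_eq_iff[OF assms jpos(1)] by auto
  then show ?thesis using False j_mem(2) by (auto simp: Fvec_def)
qed

lemma LF_sum_exch:
  assumes q: "q < card C"
  shows "LF_sum C (set (exch q)) T = (-1) ^ Suc jpos * of_int (a j) * sgn_list (exch jpos)"
proof -
  let ?t = "\<lambda>l. (-1) ^ l * of_int (a (cl ! (l - 1))) * Fvec b k (exch (l - 1)) T :: 'p mod_ring"
  have ST: "set (exch q) - C = T - C" using exch_props(1)[OF q] by blast
  have "LF_sum C (set (exch q)) T = (\<Sum>l=1..card C. ?t l)"
    unfolding LF_sum_def cl_def[symmetric] ST by (rule sum.cong) (simp_all add: exch_def)
  also have "\<dots> = (\<Sum>l\<in>{Suc jpos}. ?t l)"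
  proof (rule sum.mono_neutral_right)
    show "{Suc jpos} \<subseteq> {1..card C}" using jpos(1) by simp
    show "\<forall>l\<in>{1..card C} - {Suc jpos}. ?t l = 0"
    proof
      fix l assume "l \<in> {1..card C} - {Suc jpos}"
      then have "l - 1 < card C" "l - 1 \<noteq> jpos" by auto
      then show "?t l = 0" using Fvec_exch[of "l - 1"] by simp
    qed
  qed simp
  also have "\<dots> = (-1) ^ Suc jpos * of_int (a j) * sgn_list (exch jpos)"
    using Fvec_exch[OF jpos(1)] jpos(2) by simp
  finally show ?thesis .
qed

lemma LF_exch:
  assumes q: "q < card C"
  shows "(LF a b k C (set (exch q)) T :: 'p mod_ring)
    = sgn_list (exch q) * (-1) ^ Suc q * ((-1) ^ Suc jpos * of_int (a j) * sgn_list (exch jpos))"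
proof -
  have Sq: "set (exch q) \<inter> C = C - {cl ! q}" "set (exch q) - C = T - C"
    using exch_props(1)[OF q] by blast+
  have "card (set (exch q) \<inter> C) = card C - 1" using Sq(1) cl_nth_mem[OF q] finite_C by simp
  moreover have "\<not> C \<subseteq> set (exch q)" using Sq(1) cl_nth_mem[OF q] by blast
  ultimately have "LF a b k C (set (exch q)) T
      = sgn_list (exch q) * (-1) ^ Suc q * LF_sum C (set (exch q)) T"
    using LF_unfold[of "set (exch q)" C T] LF_index_exch[OF q] Sq(2) by (simp add: exch_def cl_def)
  then show ?thesis by (simp only: LF_sum_exch[OF q])
qed

definition signed_minor :: "nat \<Rightarrow> 'p mod_ring" where
  "signed_minor q = (-1) ^ q * col_det bp k (exch q)"

lemma sgn_list_mult_minor_jpos: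
  "sgn_list (exch jpos) * col_det bp k (exch jpos) = col_det bp k (sorted_list_of_set T)"
proof -
  have "sorted_list_of_set T = sort (exch jpos)"
    using set_exch_jpos exch_props(2)[OF jpos(1)] by (metis sorted_list_of_set_sort_remdups distinct_remdups_id)
  then show ?thesis using col_det_sort[OF exch_props(3)[OF jpos(1)], of bp] by simp
qed

(* Deleting one column from C @ (T - C) gives exactly the lists exch q, so their signed minors
   form a relation supported on C; as the circuit relation is unique up to scaling, the two are
   proportional. *)
lemma signed_minor_proportional:
  assumes q: "q < card C"
  shows "lamp C (cl ! q) * signed_minor jpos = lamp C j * signed_minor q"
proof -
  define L where "L = cl @ sorted_list_of_set (T - C)"
  have L: "distinct L" "length L = Suc k" "set L = C \<union> (T - C)"
    using distinct_cl set_cl length_cl card_exchange card_C_pos T_props(4) by (auto simp: L_def)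
  have L_nth: "L ! q = cl ! q" if "q < card C" for q using that length_cl by (simp add: L_def nth_append)
  have del_L: "del_nth (Suc q) L = exch q" if "q < card C" for q
    using that length_cl by (simp add: L_def exch_def del_nth_append)
  have "(\<Sum>q<Suc k. lamp C (L ! q) * bp i (L ! q)) = 0" if "i \<in> {1..k}" for i
  proof -
    have "(\<Sum>q<Suc k. lamp C (L ! q) * bp i (L ! q)) = (\<Sum>c\<in>set L. lamp C c * bp i c)"
      using sum_set_conv_nth[OF L(1), of "\<lambda>c. lamp C c * bp i c"] L(2) by simp
    also have "\<dots> = (\<Sum>c\<in>C. lamp C c * bp i c)"
      by (rule sum.mono_neutral_right) (use L(3) lamp_outside[OF C_circ] finite_C T_props(4) in auto)
    also have "\<dots> = 0" using lin_rel_lamp[OF C_circ] that unfolding lin_rel_def by blast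
    finally show ?thesis .
  qed
  moreover have "col_det bp k (del_nth (Suc jpos) L) \<noteq> 0"
    using del_L[OF jpos(1)] sgn_list_mult_minor_jpos lin_indep_forms_iff_col_det[of T k bp] T_props
    by (metis mult_zero_right)
  ultimately have "lamp C (L ! q) * signed_minor jpos = lamp C (L ! jpos) * signed_minor q"
    using lin_rel_proportional_minors[OF L(2), of jpos bp "\<lambda>q. lamp C (L ! q)"] q jpos card_exchange
    unfolding signed_minor_def by (simp add: del_L)
  then show ?thesis using L_nth q jpos by simp
qed

lemma Lop_exch_term:
  assumes q: "q < card C"
  shows "v (set (exch q)) * LF a b k C (set (exch q)) T
    = - signed_minor q * ((-1) ^ Suc jpos * of_int (a j) * sgn_list (exch jpos))
      / (\<Prod>i\<in>set (exch q). f i)"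
proof -
  have "v (set (exch q)) * LF a b k C (set (exch q)) T
      = (sgn_list (exch q) * v (set (exch q))) * ((-1) ^ Suc q
          * ((-1) ^ Suc jpos * of_int (a j) * sgn_list (exch jpos)))"
    by (simp only: LF_exch[OF q] mult_ac)
  also have "sgn_list (exch q) * v (set (exch q)) = col_det bp k (exch q) / (\<Prod>i\<in>set (exch q). f i)"
    using sgn_list_mult_Fxt exch_props[OF q] by blast
  finally show ?thesis by (simp add: signed_minor_def)
qed

lemma signed_minor_jpos_mult:
  "- signed_minor jpos * ((-1) ^ Suc jpos * of_int (a j) * sgn_list (exch jpos))
    = of_int (a j) * col_det bp k (sorted_list_of_set T)"
proof -
  have "- signed_minor jpos * ((-1) ^ Suc jpos * of_int (a j) * sgn_list (exch jpos))
      = of_int (a j) * (sgn_list (exch jpos) * col_det bp k (exch jpos))"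
    by (simp add: signed_minor_def power_mult_distrib[symmetric] mult_ac)
  then show ?thesis using sgn_list_mult_minor_jpos by simp
qed

lemma prod_f_exch:
  assumes q: "q < card C"
  shows "f (cl ! q) * (\<Prod>i\<in>set (exch q). f i) = f j * (\<Prod>i\<in>T. f i)"
proof -
  have "insert (cl ! q) (set (exch q)) = insert j T" "cl ! q \<notin> set (exch q)"
    using exch_props(1)[OF q] cl_nth_mem[OF q] C_diff_T by auto
  then show ?thesis using T_props(4) j_mem(2) by (metis finite_set prod.insert)
qed

lemma Lop_exch_summand:
  assumes q: "q < card C"
  shows "v (set (exch q)) * LF a b k C (set (exch q)) T
    = lamp C (cl ! q) * f (cl ! q) * (of_int (a j) / (lamp C j * f j) * v T)"
proof -
  let ?c = "cl ! q" and ?\<Pi> = "\<Prod>i\<in>set (exch q). f i"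
    and ?R = "(-1) ^ Suc jpos * of_int (a j) * sgn_list (exch jpos) :: 'p mod_ring"
  have f_nonzero: "f i \<noteq> 0" if "i \<in> {1..n}" for i using t0_gen that by blast
  have lamp_j: "lamp C j \<noteq> 0" using lamp_nonzero[OF C_circ j_mem(1)] .
  have "f ?c \<noteq> 0" using f_nonzero cl_nth_mem[OF q] circ_subset[OF C_circ] by blast
  have vT: "v T = col_det bp k (sorted_list_of_set T) / (\<Prod>i\<in>T. f i)"
    using Fxt_eq[of T] T_props by simp
  have minor_q: "signed_minor q = lamp C ?c * signed_minor jpos / lamp C j"
    using signed_minor_proportional[OF q] lamp_j by (simp add: field_simps)
  have "v (set (exch q)) * LF a b k C (set (exch q)) T
      = lamp C ?c * (- signed_minor jpos * ?R) / (lamp C j * ?\<Pi>)"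
    unfolding Lop_exch_term[OF q] minor_q by (simp add: field_simps)
  also have "\<dots> = lamp C ?c * (of_int (a j) * col_det bp k (sorted_list_of_set T)) / (lamp C j * ?\<Pi>)"
    by (simp only: signed_minor_jpos_mult)
  also have "\<dots> = lamp C ?c * f ?c * (of_int (a j) * col_det bp k (sorted_list_of_set T))
      / (lamp C j * (f ?c * ?\<Pi>))"
    using \<open>f ?c \<noteq> 0\<close> by simp
  also have "\<dots> = lamp C ?c * f ?c * (of_int (a j) / (lamp C j * f j) * v T)"
    unfolding prod_f_exch[OF q] vT by (simp add: mult_ac)
  finally show ?thesis .
qed

lemma Lop_exch: "Lop a b k n C v T = fC lam n x C * (of_int (a j) / (lamp C j * f j)) * v T"
proof -
  have "Lop a b k n C v T
      = (\<Sum>q<card C. lamp C (cl ! q) * f (cl ! q)) * (of_int (a j) / (lamp C j * f j) * v T)"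
    unfolding Lop_eq_sum_exch sum_distrib_right by (simp add: Lop_exch_summand)
  also have "(\<Sum>q<card C. lamp C (cl ! q) * f (cl ! q)) = fC lam n x C"
    using fC_eq_sum_f[OF C_circ] sum_set_conv_nth[OF distinct_cl, of "\<lambda>c. lamp C c * f c"]
    by (simp add: set_cl length_cl)
  finally show ?thesis by (simp add: mult_ac)
qed

end

section \<open>The Bethe vector as an eigenvector of the geometric Hamiltonians\<close>

context bethe_ansatz
begin

lemma Lop_exchange:
  assumes "C \<in> circ" "T \<in> basis" "C - T = {j}"
  shows "Lop a b k n C v T = fC lam n x C * (of_int (a j) / (lamp C j * f j)) * v T"
proof -
  interpret circuit_exchange n k b lam a x t0 C T j
    using assms by unfold_locales
  show ?thesis by (rule Lop_exch)
qed

definition fund_circuit :: "nat set \<Rightarrow> nat \<Rightarrow> nat set" where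
  "fund_circuit T j = (THE C. C \<in> circ \<and> C - T = {j})"

lemma fund_circuit_unique:
  assumes "T \<in> basis" "C1 \<in> circ" "C1 - T = {j}" "C2 \<in> circ" "C2 - T = {j}"
  shows "C1 = C2"
proof -
  have "finite T" "lin_indep_forms bp k T" using basis_finite assms(1) basis_iff by auto
  then show ?thesis
    by (rule fundamental_circuit_unique[of T bp k "{1..n}" C1 j C2])
       (use assms circuit_mod_p in auto)
qed

lemma fund_circuit:
  assumes T: "T \<in> basis" and j: "j \<in> {1..n} - T"
  shows "fund_circuit T j \<in> circ" "fund_circuit T j - T = {j}"
proof -
  have T': "T \<subseteq> {1..n}" "card T = k" "lin_indep_forms bp k T" "finite T"
    using T basis_iff basis_finite by auto
  have "\<not> lin_indep_forms bp k (insert j T)" using lin_dep_insert_basis[OF T'(4,2,3)] j by simp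
  moreover have "insert j T \<subseteq> {1..n}" using T'(1) j by simp
  ultimately obtain C where C: "is_circuit bp k {1..n} C" "C \<subseteq> insert j T"
    using lin_dep_has_circuit[of "insert j T" "{1..n}" bp k] T'(4) by auto
  have "j \<in> C"
  proof (rule ccontr)
    assume "j \<notin> C"
    then have "lin_indep_forms bp k C" using C(2) lin_indep_forms_subset[OF T'(4,3)] by blast
    then show False using C(1) unfolding is_circuit_def by simp
  qed
  then have C': "C \<in> circ" "C - T = {j}" using C j circ_eq_circuits_mod_p by auto
  have "fund_circuit T j = C"
    unfolding fund_circuit_def
  proof (rule the_equality)
    fix D assume D: "D \<in> circ \<and> D - T = {j}"
    show "D = C" using fund_circuit_unique[OF T conjunct1[OF D] conjunct2[OF D] C'] .
  qed (use C' in simp)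
  then show "fund_circuit T j \<in> circ" "fund_circuit T j - T = {j}" using C' by simp_all
qed

lemma sum_circ_eq_sum_fund_circuit:
  assumes T: "T \<in> basis" and h: "\<And>C. C \<in> circ \<Longrightarrow> \<not> (\<exists>j. C - T = {j}) \<Longrightarrow> h C = 0"
  shows "(\<Sum>C\<in>circ. h C) = (\<Sum>j\<in>{1..n} - T. h (fund_circuit T j))"
proof -
  let ?FC = "fund_circuit T"
  have "(\<Sum>C\<in>circ. h C) = (\<Sum>C\<in>?FC ` ({1..n} - T). h C)"
  proof (rule sum.mono_neutral_right[OF finite_circ])
    show "?FC ` ({1..n} - T) \<subseteq> circ" using fund_circuit[OF T] by blast
    show "\<forall>C\<in>circ - ?FC ` ({1..n} - T). h C = 0"
    proof
      fix C assume C: "C \<in> circ - ?FC ` ({1..n} - T)"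
      have "\<not> (\<exists>j. C - T = {j})"
      proof
        assume "\<exists>j. C - T = {j}"
        then obtain j where j: "C - T = {j}" by blast
        then have jJ: "j \<in> {1..n} - T" using circ_subset C by blast
        then have "C = ?FC j" using fund_circuit_unique[OF T _ j] fund_circuit[OF T jJ] C by blast
        then show False using C jJ by blast
      qed
      then show "h C = 0" using h C by blast
    qed
  qed
  also have "\<dots> = (\<Sum>j\<in>{1..n} - T. h (?FC j))"
    by (rule sum.reindex[unfolded comp_def], rule inj_onI) (metis fund_circuit(2)[OF T] singleton_inject)
  finally show ?thesis .
qed

definition fund_coeff :: "nat set \<Rightarrow> nat \<Rightarrow> nat \<Rightarrow> 'p mod_ring" where
  "fund_coeff T j m = lamp (fund_circuit T j) m / lamp (fund_circuit T j) j"

lemma Kop_eq_sum_fund_coeff: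
  assumes T: "T \<in> basis"
  shows "Kop a b lam k n x i v T = (\<Sum>j\<in>{1..n} - T. fund_coeff T j i * (of_int (a j) / f j)) * v T"
proof -
  have "Kop a b lam k n x i v T
      = (\<Sum>j\<in>{1..n} - T. (\<lambda>C. lamp C i / fC lam n x C * Lop a b k n C v T) (fund_circuit T j))"
    unfolding Kop_def by (rule sum_circ_eq_sum_fund_circuit[OF T]) (simp add: Lop_eq_zero)
  also have "\<dots> = (\<Sum>j\<in>{1..n} - T. fund_coeff T j i * (of_int (a j) / f j)) * v T"
    unfolding sum_distrib_right
  proof (rule sum.cong[OF refl])
    fix j assume j: "j \<in> {1..n} - T"
    note C = fund_circuit[OF T j]
    have "fC lam n x (fund_circuit T j) \<noteq> 0" using x_gen C(1) by blast
    then show "(\<lambda>C. lamp C i / fC lam n x C * Lop a b k n C v T) (fund_circuit T j)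
        = fund_coeff T j i * (of_int (a j) / f j) * v T"
      using Lop_exchange[OF C(1) T C(2)] by (simp add: fund_coeff_def field_simps)
  qed
  finally show ?thesis .
qed

lemma bp_eq_fund_coeff_sum:
  assumes T: "T \<in> basis" and j: "j \<in> {1..n} - T" and r: "r \<in> {1..k}"
  shows "bp r j = - (\<Sum>m\<in>T. fund_coeff T j m * bp r m)"
proof -
  let ?C = "fund_circuit T j"
  have C: "?C \<in> circ" "?C - T = {j}" using fund_circuit[OF T j] by simp_all
  have fT: "finite T" using basis_finite[OF T] .
  have "0 = (\<Sum>c\<in>?C. lamp ?C c * bp r c)" using lin_rel_lamp[OF C(1)] r unfolding lin_rel_def by simp
  also have "\<dots> = (\<Sum>c\<in>insert j T. lamp ?C c * bp r c)"
  proof (rule sum.mono_neutral_left)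
    show "finite (insert j T)" using fT by simp
    show "?C \<subseteq> insert j T" using C(2) by blast
    show "\<forall>c\<in>insert j T - ?C. lamp ?C c * bp r c = 0"
    proof
      fix c assume "c \<in> insert j T - ?C"
      then have "lamp ?C c = 0" by (intro lamp_outside[OF C(1)]) simp
      then show "lamp ?C c * bp r c = 0" by (simp only: mult_zero_left)
    qed
  qed
  also have "\<dots> = lamp ?C j * bp r j + (\<Sum>m\<in>T. lamp ?C m * bp r m)" using fT j by simp
  finally have "lamp ?C j * bp r j + (\<Sum>m\<in>T. lamp ?C m * bp r m) = 0" by (rule sym)
  then have s0: "lamp ?C j * bp r j = - (\<Sum>m\<in>T. lamp ?C m * bp r m)"
    by (simp only: eq_neg_iff_add_eq_0)
  have "j \<in> ?C" using C(2) by blast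
  then have "lamp ?C j \<noteq> 0" by (rule lamp_nonzero[OF C(1)])
  then have "bp r j = lamp ?C j * bp r j / lamp ?C j" by simp
  also have "\<dots> = - (\<Sum>m\<in>T. lamp ?C m * bp r m) / lamp ?C j" by (simp only: s0)
  finally show ?thesis by (simp add: fund_coeff_def sum_divide_distrib times_divide_eq_left)
qed

lemma fund_coeff_outside_basis:
  assumes T: "T \<in> basis" and i: "i \<in> {1..n} - T" and j: "j \<in> {1..n} - T"
  shows "fund_coeff T j i = (if j = i then 1 else 0)"
proof (cases "j = i")
  case True
  have "i \<in> fund_circuit T i" using fund_circuit(2)[OF T i] by blast
  then have "lamp (fund_circuit T i) i \<noteq> 0" by (rule lamp_nonzero[OF fund_circuit(1)[OF T i]])
  then show ?thesis using True by (simp add: fund_coeff_def)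
next
  case False
  then have "i \<notin> fund_circuit T j" using fund_circuit(2)[OF T j] i by (metis DiffD2 DiffI singletonD)
  then show ?thesis using False by (simp add: fund_coeff_def lamp_outside[OF fund_circuit(1)[OF T j]])
qed

(* Rewritten in the basis T, the Bethe ansatz equations say that the differences below are the
   coefficients of a linear relation among the forms of T. *)
lemma fund_coeff_sum_in_basis:
  assumes T: "T \<in> basis" and i: "i \<in> T"
  shows "(\<Sum>j\<in>{1..n} - T. fund_coeff T j i * (of_int (a j) / f j)) = of_int (a i) / f i"
proof -
  define w where "w q = of_int (a q) / f q" for q
  define c where "c m = w m - (\<Sum>j\<in>{1..n} - T. w j * fund_coeff T j m)" for m
  have T': "T \<subseteq> {1..n}" "lin_indep_forms bp k T" using T basis_iff by auto
  have "lin_rel bp k c T" unfolding lin_rel_def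
  proof
    fix r assume r: "r \<in> {1..k}"
    have "0 = (\<Sum>q\<in>{1..n}. bp r q * w q)" using bethe r by (simp add: w_def times_divide_eq_right)
    also have "\<dots> = (\<Sum>m\<in>T. w m * bp r m) + (\<Sum>j\<in>{1..n} - T. w j * bp r j)"
      using sum.subset_diff[OF T'(1), of "\<lambda>q. bp r q * w q"] by (simp add: mult.commute add.commute)
    also have "(\<Sum>j\<in>{1..n} - T. w j * bp r j)
        = (\<Sum>j\<in>{1..n} - T. - (\<Sum>m\<in>T. w j * fund_coeff T j m * bp r m))"
    proof (rule sum.cong[OF refl])
      fix j assume j: "j \<in> {1..n} - T"
      show "w j * bp r j = - (\<Sum>m\<in>T. w j * fund_coeff T j m * bp r m)"
        unfolding bp_eq_fund_coeff_sum[OF T j r] by (simp add: sum_distrib_left mult.assoc)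
    qed
    also have "\<dots> = - (\<Sum>m\<in>T. (\<Sum>j\<in>{1..n} - T. w j * fund_coeff T j m) * bp r m)"
      by (simp only: sum_negf sum.swap[of _ "{1..n} - T"] sum_distrib_right)
    finally show "(\<Sum>m\<in>T. c m * bp r m) = 0" by (simp add: c_def left_diff_distrib sum_subtractf)
  qed
  then have "c i = 0" using lin_indep_forms_rel_zero[OF T'(2)] i by blast
  then show ?thesis by (simp add: c_def w_def mult.commute)
qed

lemma fund_coeff_sum:
  assumes T: "T \<in> basis" and i: "i \<in> {1..n}"
  shows "(\<Sum>j\<in>{1..n} - T. fund_coeff T j i * (of_int (a j) / f j)) = of_int (a i) / f i"
proof (cases "i \<in> T")
  case True
  then show ?thesis by (rule fund_coeff_sum_in_basis[OF T])
next
  case False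
  then have iJ: "i \<in> {1..n} - T" using i by simp
  have "(\<Sum>j\<in>{1..n} - T. fund_coeff T j i * (of_int (a j) / f j))
      = (\<Sum>j\<in>{1..n} - T. if j = i then of_int (a j) / f j else 0)"
    by (rule sum.cong) (simp_all add: fund_coeff_outside_basis[OF T iJ])
  also have "\<dots> = of_int (a i) / f i" using iJ by (simp add: sum.delta)
  finally show ?thesis .
qed

lemma Kop_Fxt:
  assumes "i \<in> {1..n}"
  shows "Kop a b lam k n x i v T = of_int (a i) / f i * v T"
proof (cases "T \<in> basis")
  case True
  then show ?thesis using Kop_eq_sum_fund_coeff fund_coeff_sum assms by simp
next
  case False
  then show ?thesis unfolding Kop_def using Lop_eq_zero by (simp add: Fxt_def)
qed

end

theorem theorem6p1:
  fixes n k :: nat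
    and b :: "nat \<Rightarrow> nat \<Rightarrow> int"
    and lam :: "nat set \<Rightarrow> nat \<Rightarrow> int"
    and a :: "nat \<Rightarrow> int"
    and x t0 :: "nat \<Rightarrow> 'p::prime_card mod_ring"
  assumes k_pos: "0 < k" and k_lt_n: "k < n"
    and g_nonzero: "\<forall>j\<in>{1..n}. \<exists>i\<in>{1..k}. b i j \<noteq> 0"
    and g_span: "\<exists>S\<subseteq>{1..n}. card S = k \<and> indepC b k S"
    and lam_circ: "\<forall>C\<in>circuitsC b k n.
        (\<exists>i\<in>C. lam C i \<noteq> 0) \<and> (\<forall>i. i \<notin> C \<longrightarrow> lam C i = 0) \<and>
        (\<forall>l\<in>{1..k}. (\<Sum>i\<in>C. lam C i * b l i) = 0) \<and> Gcd (lam C ` C) = 1"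
    and a_nonzero: "\<forall>j\<in>{1..n}. a j \<noteq> 0"
    and good_g: "\<forall>j\<in>{1..n}. \<exists>i\<in>{1..k}. (of_int (b i j) :: 'p mod_ring) \<noteq> 0"
    and good_C: "\<forall>C\<in>circuitsC b k n. \<exists>i\<in>C. (of_int (lam C i) :: 'p mod_ring) \<noteq> 0"
    and good_circuits: "circuitsP TYPE('p) b k n = circuitsC b k n"
    and x_gen: "\<forall>C\<in>circuitsC b k n. fC lam n x C \<noteq> 0"
    and t0_gen: "\<forall>j\<in>{1..n}. fj b k x t0 j \<noteq> 0"
    and bethe: "\<forall>i\<in>{1..k}. (\<Sum>j\<in>{1..n}. of_int (b i j) * of_int (a j) / fj b k x t0 j) = 0"
  shows "singular_vec a b k n (Fxt b k n x t0)
    \<and> (\<forall>i\<in>{1..n}. Kop a b lam k n x i (Fxt b k n x t0)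
          = (\<lambda>T. of_int (a i) / fj b k x t0 i * Fxt b k n x t0 T))"
proof -
  interpret bethe_ansatz n k b lam a x t0
    using k_pos lam_circ good_C good_circuits x_gen t0_gen bethe by unfold_locales auto
  show ?thesis using singular_vec_Fxt Kop_Fxt by (simp add: fun_eq_iff)
qed

end
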